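(* Let $C$ be a closed subset of the complete Riemannian manifold $(M,g)$, let $t,s>0$ and $y\in M$, and define $\varphi_{t,s,y}:M\to\mathbb{R}$ by $\varphi_{t,s,y}(x)=\dfrac{d_C(x)^2}{2(t+s)}-\dfrac{d(y,x)^2}{2s}$. If $x\in M$ satisfies $\varphi_{t,s,y}(x)\ge\varphi_{t,s,y}(y)$, then $$d(x,y)\le\frac{2s}{t}d_C(y)\quad\text{and}\quad d_C(x)\le\Big(1+\frac{2s}{t}\Big)d_C(y).$$
   Context: $d$ is the Riemannian distance of $g$ and $d_C(x)=\inf_{c\in C}d(c,x)$. *)

theory Defs
  imports "HOL-Analysis.Analysis"
begin

definition phi_tsy :: "'a::metric_space set \<Rightarrow> real \<Rightarrow> real \<Rightarrow> 'a \<Rightarrow> 'a \<Rightarrow> real" where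
  "phi_tsy C t s y x = (infdist x C)\<^sup>2 / (2 * (t + s)) - (dist y x)\<^sup>2 / (2 * s)"

end

theory Submission
  imports Defs
begin

text \<open>Write \<open>a = d\<^sub>C(y)\<close>, \<open>b = d\<^sub>C(x)\<close> and \<open>r = d(x,y)\<close>. Clearing denominators, the hypothesis
  reads \<open>s a\<^sup>2 + (t + s) r\<^sup>2 \<le> s b\<^sup>2\<close>, while \<open>d\<^sub>C\<close> is 1-Lipschitz, so \<open>b \<le> a + r\<close>. Hence
  \<open>s a\<^sup>2 + (t + s) r\<^sup>2 \<le> s (a + r)\<^sup>2\<close>, i.e. \<open>t r\<^sup>2 \<le> 2 s a r\<close>, which gives \<open>r \<le> (2s/t) a\<close>;
  the bound on \<open>b\<close> follows from \<open>b \<le> a + r\<close> again.\<close>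

lemma phi_tsy_ge_iff:
  fixes C :: "'a::metric_space set"
  assumes "t > 0" and "s > 0"
  shows "phi_tsy C t s y x \<ge> phi_tsy C t s y y \<longleftrightarrow>
    s * (infdist y C)\<^sup>2 + (t + s) * (dist x y)\<^sup>2 \<le> s * (infdist x C)\<^sup>2"
proof -
  let ?a = "(infdist y C)\<^sup>2" and ?b = "(infdist x C)\<^sup>2" and ?r = "(dist x y)\<^sup>2"
  have "phi_tsy C t s y x \<ge> phi_tsy C t s y y \<longleftrightarrow>
      ?a / (2 * (t + s)) + ?r / (2 * s) \<le> ?b / (2 * (t + s))"
    by (simp add: phi_tsy_def dist_commute le_diff_eq)
  moreover have "2 * s * (t + s) * (?a / (2 * (t + s)) + ?r / (2 * s)) = s * ?a + (t + s) * ?r"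
    and "2 * s * (t + s) * (?b / (2 * (t + s))) = s * ?b"
    \<comment> \<open>\<open>t + s \<noteq> 0\<close> must be given as a conditional rewrite rule: as a premise, simp would
       normalise it into a form that \<open>field_simps\<close> cannot use\<close>
    using assms by (simp_all add: field_simps add_pos_pos[THEN less_imp_neq, symmetric])
  moreover have "2 * s * (t + s) > 0"
    using assms by simp
  ultimately show ?thesis
    by (metis mult_le_cancel_left_pos)
qed

lemma le_of_square_gap_bound:
  fixes a b r s t :: real
  assumes "0 \<le> a" and "0 \<le> b" and "0 \<le> r" and "b \<le> a + r" and "t > 0" and "s > 0"
    and gap: "s * a\<^sup>2 + (t + s) * r\<^sup>2 \<le> s * b\<^sup>2"
  shows "r \<le> (2 * s / t) * a"
proof -
  have "b\<^sup>2 \<le> (a + r)\<^sup>2"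
    using assms(4,2) by (rule power_mono)
  then have "s * b\<^sup>2 \<le> s * (a + r)\<^sup>2"
    using \<open>s > 0\<close> by simp
  with gap have "t * r\<^sup>2 \<le> 2 * s * a * r"
    by (simp add: power2_sum algebra_simps)
  then have "t * r \<le> 2 * s * a"
    using \<open>0 \<le> a\<close> \<open>0 \<le> r\<close> \<open>s > 0\<close> by (cases "r = 0") (simp_all add: power2_eq_square)
  with \<open>t > 0\<close> show ?thesis
    by (simp add: field_simps)
qed

theorem lemma7p1:
  fixes C :: "'a::complete_space set" and t s :: real and x y :: 'a
  assumes "closed C" and "t > 0" and "s > 0"
    and "phi_tsy C t s y x \<ge> phi_tsy C t s y y"
  shows "dist x y \<le> (2 * s / t) * infdist y C
       \<and> infdist x C \<le> (1 + 2 * s / t) * infdist y C"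
proof -
  have lipschitz: "infdist x C \<le> infdist y C + dist x y"
    by (rule infdist_triangle)
  have "dist x y \<le> (2 * s / t) * infdist y C"
  proof (rule le_of_square_gap_bound)
    show "s * (infdist y C)\<^sup>2 + (t + s) * (dist x y)\<^sup>2 \<le> s * (infdist x C)\<^sup>2"
      using assms(4) phi_tsy_ge_iff[OF assms(2,3)] by blast
  qed (use assms(2,3) lipschitz in \<open>simp_all add: infdist_nonneg\<close>)
  with lipschitz show ?thesis
    by (simp add: algebra_simps)
qed

end
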